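(* For every function $g_1:\mathbb{N}\to\mathbb{N}$ there exists a function $g_2:\mathbb{N}\to\mathbb{N}$ with $g_2\ge g_1$ such that the following holds. Let $H=(V,E)$ be a graph of cutwidth $\mathrm{cw}(H)$, let $F\subseteq V$ be a set of initially burned vertices with $|F|\le g_1(\mathrm{cw}(H))$, and let the budget be any $b\ge 1$. Then there is a protection strategy for the firefighter process on $H$ started from the burned set $F$ such that at most $g_2(\mathrm{cw}(H))$ vertices are burned at the end of the process.
   Context: Firefighter process with initial burned set $F$: at step $t=0$ all vertices of $F$ are burned. At every step $t>0$: (1) protection phase: at most $b$ vertices not yet burned become protected; (2) spreading phase: every unprotected vertex adjacent to a burned vertex becomes burned. Burned and protected vertices stay so; the process stops when no new vertex can become burned. The cutwidth $\mathrm{cw}(G)$ of a graph $G$ on $n$ vertices is the minimum $k$ such that there is an ordering $v_1,\dots,v_n$ of its vertices with at most $k$ edges between $\{v_1,\dots,v_i\}$ and $\{v_{i+1},\dots,v_n\}$ for every $i\in\{1,\dots,n-1\}$. *)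

theory Defs
  imports Main
begin

definition graph :: "nat set \<Rightarrow> nat set set \<Rightarrow> bool" where
  "graph V E \<longleftrightarrow> finite V \<and> (\<forall>e\<in>E. e \<subseteq> V \<and> card e = 2)"

definition cut_edges :: "nat set set \<Rightarrow> nat set \<Rightarrow> nat set \<Rightarrow> nat set set" where
  "cut_edges E A B = {e \<in> E. e \<inter> A \<noteq> {} \<and> e \<inter> B \<noteq> {}}"

definition cutwidth :: "nat set \<Rightarrow> nat set set \<Rightarrow> nat" where
  "cutwidth V E = (LEAST k. \<exists>xs. distinct xs \<and> set xs = V \<and>
     (\<forall>i\<in>{1..<length xs}. card (cut_edges E (set (take i xs)) (set (drop i xs))) \<le> k))"

fun ff_state :: "nat set set \<Rightarrow> nat set \<Rightarrow> (nat \<Rightarrow> nat set) \<Rightarrow> nat \<Rightarrow> nat set \<times> nat set" where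
  "ff_state E F S 0 = (F, {})"
| "ff_state E F S (Suc t) =
     (let B = fst (ff_state E F S t); P = snd (ff_state E F S t) \<union> S (Suc t)
      in (B \<union> {v. v \<notin> P \<and> (\<exists>u\<in>B. {u, v} \<in> E)}, P))"

definition valid_strategy :: "nat set \<Rightarrow> nat set set \<Rightarrow> nat set \<Rightarrow> nat \<Rightarrow> (nat \<Rightarrow> nat set) \<Rightarrow> bool" where
  "valid_strategy V E F b S \<longleftrightarrow>
     (\<forall>t>0. S t \<subseteq> V \<and> card (S t) \<le> b \<and> S t \<inter> fst (ff_state E F S (t - 1)) = {})"

definition final_burned :: "nat set set \<Rightarrow> nat set \<Rightarrow> (nat \<Rightarrow> nat set) \<Rightarrow> nat set" where
  "final_burned E F S = (\<Union>t. fst (ff_state E F S t))"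

end

theory Submission
  imports Defs
begin

(*
  Induction on the width k of a linear layout, with budget one.  Let the fire spread freely for
  r = 4(k+1)|F| steps: the burned set is then the r-neighbourhood B of F, of size at most
  |F|(2k+3)^r.  Call a gap of the layout covered if an edge inside B crosses it.  For each initial
  fire f, the uncovered gaps nearest to f on either side (its frontier) are crossed by at most
  2(k+1) edges, whose endpoints outside B form a set P of at most r vertices; the firefighter
  protects P during those r steps.  Afterwards the fire is trapped in the vertices W enclosed
  around some f by covered gaps, and every gap crossed by an edge of W - B - P is also crossed by
  an edge inside B.  Hence the unburned part W - B - P has a layout of width k and at most
  |F|(2k+3)^(r+1) fresh fires, and the induction hypothesis applies.
*)

section \<open>Linear layouts\<close>

text \<open>Gap \<open>i\<close> of a layout \<open>pos\<close> separates the positions below \<open>i\<close> from those at or above \<open>i\<close>.\<close>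

definition crosses :: "(nat \<Rightarrow> nat) \<Rightarrow> nat set \<Rightarrow> nat \<Rightarrow> bool" where
  "crosses pos e i \<longleftrightarrow> (\<exists>x\<in>e. \<exists>y\<in>e. pos x < i \<and> i \<le> pos y)"

definition linear_layout :: "nat set \<Rightarrow> nat set set \<Rightarrow> (nat \<Rightarrow> nat) \<Rightarrow> nat \<Rightarrow> bool" where
  "linear_layout V E pos k \<longleftrightarrow> inj_on pos V \<and> (\<forall>i. card {e\<in>E. crosses pos e i} \<le> k)"

definition between :: "nat \<Rightarrow> nat \<Rightarrow> nat \<Rightarrow> bool" where
  "between a p i \<longleftrightarrow> (a < i \<and> i \<le> p) \<or> (p < i \<and> i \<le> a)"

lemma crosses_doubleton: "crosses pos {x, y} i \<longleftrightarrow> between (pos x) (pos y) i"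
  unfolding crosses_def between_def by auto

lemma between_cases: "between p q i \<Longrightarrow> between a p i \<or> between a q i"
  unfolding between_def by auto

lemma between_split: "between a p i \<Longrightarrow> \<not> between a q i \<Longrightarrow> between q p i"
  unfolding between_def by auto

lemma between_nearest:
  assumes "between a p i" and "\<not> C i"
  shows "\<exists>i0. between a p i0 \<and> \<not> C i0 \<and> (\<forall>j. between a i0 j \<and> j \<noteq> i0 \<longrightarrow> C j)"
proof -
  define dist where "dist j = (if a < j then j - a else a - j)" for j
  obtain i0 where i0: "between a p i0 \<and> \<not> C i0"
    and least: "\<And>j. between a p j \<and> \<not> C j \<Longrightarrow> dist i0 \<le> dist j"
    using ex_has_least_nat[of "\<lambda>j. between a p j \<and> \<not> C j" i dist] assms by blast
  have "C j" if "between a i0 j" "j \<noteq> i0" for j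
  proof (rule ccontr)
    assume "\<not> C j"
    moreover have "between a p j" "dist j < dist i0"
      using that i0 unfolding between_def dist_def by auto
    ultimately show False using least[of j] by linarith
  qed
  then show ?thesis using i0 by blast
qed

lemma graph_finite_edges: "graph V E \<Longrightarrow> finite E"
  unfolding graph_def by (meson PowI finite_Pow_iff finite_subset subsetI)

lemma graph_edgeD: "graph V E \<Longrightarrow> {u, v} \<in> E \<Longrightarrow> u \<in> V \<and> v \<in> V \<and> u \<noteq> v"
  unfolding graph_def by (cases "u = v") auto

lemma graph_edgeE:
  assumes "graph V E" "e \<in> E"
  obtains x y where "e = {x, y}" "x \<noteq> y"
  using assms unfolding graph_def by (auto simp: card_2_iff)

lemma card_Union_edges_le:
  assumes "graph V E" "A \<subseteq> E"
  shows "card (\<Union>A) \<le> 2 * card A"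
proof -
  have "card (\<Union>A) \<le> sum card A" by (rule card_Union_le_sum_card)
  also have "\<dots> = sum (\<lambda>_. 2) A"
    using assms unfolding graph_def by (intro sum.cong) auto
  also have "\<dots> = 2 * card A" by simp
  finally show ?thesis .
qed

lemma linear_layout_cut_le: "linear_layout V E pos k \<Longrightarrow> card {e\<in>E. crosses pos e i} \<le> k"
  unfolding linear_layout_def by blast

lemma linear_layout_0_no_edges:
  assumes g: "graph V E" and lay: "linear_layout V E pos 0"
  shows "E = {}"
proof (rule ccontr)
  assume "E \<noteq> {}"
  then obtain e where "e \<in> E" by blast
  then obtain x y where e: "{x, y} \<in> E" "x \<noteq> y" using graph_edgeE[OF g] by metis
  then have "pos x \<noteq> pos y"
    using lay graph_edgeD[OF g e(1)] unfolding linear_layout_def by (auto dest: inj_onD)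
  then have "crosses pos {x, y} (max (pos x) (pos y))"
    unfolding crosses_doubleton between_def by auto
  then have "{x, y} \<in> {e\<in>E. crosses pos e (max (pos x) (pos y))}" using e by blast
  moreover have "finite {e\<in>E. crosses pos e (max (pos x) (pos y))}" using graph_finite_edges[OF g] by simp
  ultimately have "0 < card {e\<in>E. crosses pos e (max (pos x) (pos y))}" using card_gt_0_iff by blast
  then show False using linear_layout_cut_le[OF lay] by (metis not_le)
qed

lemma degree_le_twice_width:
  assumes g: "graph V E" and lay: "linear_layout V E pos k" and u: "u \<in> V"
  shows "card {v. {u, v} \<in> E} \<le> 2 * k"
proof -
  let ?L = "{v. {u, v} \<in> E \<and> pos v < pos u}" and ?R = "{v. {u, v} \<in> E \<and> pos u < pos v}"
  have inj: "inj_on (\<lambda>v. {u, v}) A" for A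
    by (rule inj_onI) (auto simp: doubleton_eq_iff)
  have "(\<lambda>v. {u, v}) ` ?L \<subseteq> {e\<in>E. crosses pos e (pos u)}"
    by (auto simp: crosses_doubleton between_def)
  then have "card ((\<lambda>v. {u, v}) ` ?L) \<le> card {e\<in>E. crosses pos e (pos u)}"
    using graph_finite_edges[OF g] by (intro card_mono) auto
  then have "card ?L \<le> card {e\<in>E. crosses pos e (pos u)}" by (simp add: card_image[OF inj])
  also have "\<dots> \<le> k" by (rule linear_layout_cut_le[OF lay])
  finally have L: "card ?L \<le> k" .
  have "(\<lambda>v. {u, v}) ` ?R \<subseteq> {e\<in>E. crosses pos e (Suc (pos u))}"
    by (auto simp: crosses_doubleton between_def)
  then have "card ((\<lambda>v. {u, v}) ` ?R) \<le> card {e\<in>E. crosses pos e (Suc (pos u))}"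
    using graph_finite_edges[OF g] by (intro card_mono) auto
  then have "card ?R \<le> card {e\<in>E. crosses pos e (Suc (pos u))}" by (simp add: card_image[OF inj])
  also have "\<dots> \<le> k" by (rule linear_layout_cut_le[OF lay])
  finally have R: "card ?R \<le> k" .
  have "inj_on pos V" using lay unfolding linear_layout_def by blast
  then have "{v. {u, v} \<in> E} \<subseteq> ?L \<union> ?R"
    using u graph_edgeD[OF g] by (fastforce simp: inj_on_def)
  moreover have "finite (?L \<union> ?R)"
    using g graph_edgeD[OF g] unfolding graph_def by (auto intro: finite_subset)
  ultimately have "card {v. {u, v} \<in> E} \<le> card ?L + card ?R"
    by (meson card_Un_le card_mono le_trans)
  then show ?thesis using L R by linarith
qed

lemma cutwidth_ordering:
  assumes g: "graph V E"
  obtains xs where "distinct xs" "set xs = V"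
    "\<forall>i\<in>{1..<length xs}. card (cut_edges E (set (take i xs)) (set (drop i xs))) \<le> cutwidth V E"
proof -
  let ?Q = "\<lambda>k. \<exists>xs. distinct xs \<and> set xs = V \<and>
     (\<forall>i\<in>{1..<length xs}. card (cut_edges E (set (take i xs)) (set (drop i xs))) \<le> k)"
  have "finite V" using g unfolding graph_def by blast
  then have "?Q (card E)"
    using graph_finite_edges[OF g] unfolding cut_edges_def
    by (intro exI[of _ "sorted_list_of_set V"]) (auto intro: card_mono)
  then have "?Q (cutwidth V E)" unfolding cutwidth_def by (rule LeastI)
  then show ?thesis using that by blast
qed

lemma linear_layout_of_ordering:
  assumes g: "graph V E" and xs: "distinct xs" "set xs = V"
    and cuts: "\<forall>i\<in>{1..<length xs}. card (cut_edges E (set (take i xs)) (set (drop i xs))) \<le> k"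
  shows "linear_layout V E (the_inv_into {..<length xs} ((!) xs)) k"
proof -
  let ?pos = "the_inv_into {..<length xs} ((!) xs)"
  have bij: "bij_betw ((!) xs) {..<length xs} V" using bij_betw_nth xs by blast
  have pos: "?pos v < length xs" "xs ! ?pos v = v" if "v \<in> V" for v
    using bij that f_the_inv_into_f_bij_betw[OF bij] the_inv_into_into[of "(!) xs" "{..<length xs}"]
    by (auto simp: bij_betw_def)
  have "card {e\<in>E. crosses pos e i} \<le> k" if "pos = ?pos" for pos i
  proof (cases "1 \<le> i \<and> i < length xs")
    case True
    have "{e\<in>E. crosses pos e i} \<subseteq> cut_edges E (set (take i xs)) (set (drop i xs))"
    proof
      fix e assume "e \<in> {e\<in>E. crosses pos e i}"
      then obtain x y where e: "e \<in> E" "x \<in> e" "y \<in> e" "pos x < i" "i \<le> pos y"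
        unfolding crosses_def by blast
      then have "x \<in> V" "y \<in> V" using g unfolding graph_def by auto
      then have x: "pos x < length xs" "xs ! pos x = x" and y: "pos y < length xs" "xs ! pos y = y"
        using pos that by auto
      have "take i xs ! pos x = x" "pos x < length (take i xs)" using x e(4) by auto
      then have "x \<in> set (take i xs)" by (metis nth_mem)
      moreover have "drop i xs ! (pos y - i) = y" "pos y - i < length (drop i xs)"
        using y e(5) by auto
      then have "y \<in> set (drop i xs)" by (metis nth_mem)
      ultimately show "e \<in> cut_edges E (set (take i xs)) (set (drop i xs))"
        unfolding cut_edges_def using e by blast
    qed
    then have "card {e\<in>E. crosses pos e i} \<le> card (cut_edges E (set (take i xs)) (set (drop i xs)))"
      using graph_finite_edges[OF g] unfolding cut_edges_def by (intro card_mono) auto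
    also have "\<dots> \<le> k" using cuts True by auto
    finally show ?thesis .
  next
    case False
    have "\<not> crosses pos e i" if "e \<in> E" for e
    proof
      assume "crosses pos e i"
      then obtain x y where "x \<in> e" "y \<in> e" "pos x < i" "i \<le> pos y" unfolding crosses_def by blast
      moreover have "y \<in> V" using g \<open>e \<in> E\<close> \<open>y \<in> e\<close> unfolding graph_def by blast
      ultimately show False using pos(1)[of y] False \<open>pos = ?pos\<close> by simp
    qed
    then have "{e\<in>E. crosses pos e i} = {}" by blast
    then show ?thesis by (metis card.empty zero_le)
  qed
  moreover have "inj_on ?pos V"
    using bij by (metis bij_betw_def inj_on_the_inv_into)
  ultimately show ?thesis unfolding linear_layout_def by blast
qed

lemma cutwidth_linear_layout:
  assumes "graph V E"
  shows "\<exists>pos. linear_layout V E pos (cutwidth V E)"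
proof -
  obtain xs where "distinct xs" "set xs = V"
    "\<forall>i\<in>{1..<length xs}. card (cut_edges E (set (take i xs)) (set (drop i xs))) \<le> cutwidth V E"
    using cutwidth_ordering[OF assms] by blast
  then show ?thesis using linear_layout_of_ordering[OF assms] by blast
qed

section \<open>Neighbourhoods and the fire process\<close>

fun nbhd :: "nat set set \<Rightarrow> nat set \<Rightarrow> nat \<Rightarrow> nat set" where
  "nbhd E F 0 = F"
| "nbhd E F (Suc t) = nbhd E F t \<union> {v. \<exists>u\<in>nbhd E F t. {u, v} \<in> E}"

lemma nbhd_mono: "s \<le> t \<Longrightarrow> nbhd E F s \<subseteq> nbhd E F t"
  by (induction t) (auto simp: le_Suc_eq)

lemma nbhd_subset: "graph V E \<Longrightarrow> F \<subseteq> V \<Longrightarrow> nbhd E F t \<subseteq> V"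
  by (induction t) (auto dest: graph_edgeD)

lemma card_nbhd_le:
  assumes g: "graph V E" and lay: "linear_layout V E pos k" and F: "F \<subseteq> V"
  shows "card (nbhd E F t) \<le> card F * (2 * k + 1) ^ t"
proof (induction t)
  case 0 then show ?case by simp
next
  case (Suc t)
  let ?N = "nbhd E F t"
  have fin: "finite ?N" using nbhd_subset[OF g F] g unfolding graph_def by (meson finite_subset)
  have "card (\<Union>u\<in>?N. {v. {u, v} \<in> E}) \<le> (\<Sum>u\<in>?N. card {v. {u, v} \<in> E})"
    by (rule card_UN_le[OF fin])
  also have "\<dots> \<le> card ?N * (2 * k)"
    using sum_bounded_above[of ?N "\<lambda>u. card {v. {u, v} \<in> E}" "2 * k"]
      degree_le_twice_width[OF g lay] nbhd_subset[OF g F] by auto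
  finally have U: "card (\<Union>u\<in>?N. {v. {u, v} \<in> E}) \<le> card ?N * (2 * k)" .
  have "nbhd E F (Suc t) = ?N \<union> (\<Union>u\<in>?N. {v. {u, v} \<in> E})" by auto
  then have "card (nbhd E F (Suc t)) \<le> card ?N + card (\<Union>u\<in>?N. {v. {u, v} \<in> E})"
    by (simp add: card_Un_le)
  also have "\<dots> \<le> card ?N + card ?N * (2 * k)" using U by simp
  also have "\<dots> = card ?N * (2 * k + 1)" by simp
  also have "\<dots> \<le> card F * (2 * k + 1) ^ t * (2 * k + 1)" using Suc by (rule mult_right_mono) simp
  finally show ?case by (simp add: algebra_simps)
qed

definition spread :: "nat set set \<Rightarrow> nat set \<Rightarrow> nat set \<Rightarrow> nat set" where
  "spread E X Q = {v. v \<notin> Q \<and> (\<exists>u\<in>X. {u, v} \<in> E)}"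

lemma ff_state_snd_Suc: "snd (ff_state E F S (Suc t)) = snd (ff_state E F S t) \<union> S (Suc t)"
  by (simp add: Let_def)

lemma ff_state_fst_Suc:
  "fst (ff_state E F S (Suc t)) =
     fst (ff_state E F S t) \<union> spread E (fst (ff_state E F S t)) (snd (ff_state E F S (Suc t)))"
  by (simp add: Let_def spread_def)

declare ff_state.simps(2)[simp del]

lemma ff_state_fst_mono: "s \<le> t \<Longrightarrow> fst (ff_state E F S s) \<subseteq> fst (ff_state E F S t)"
  by (induction t) (auto simp: le_Suc_eq ff_state_fst_Suc)

lemma ff_state_protected: "0 < s \<Longrightarrow> s \<le> t \<Longrightarrow> S s \<subseteq> snd (ff_state E F S t)"
  by (induction t) (auto simp: le_Suc_eq ff_state_snd_Suc)

lemma ff_state_fst_subset: "graph V E \<Longrightarrow> F \<subseteq> V \<Longrightarrow> fst (ff_state E F S t) \<subseteq> V"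
  by (induction t) (auto simp: ff_state_fst_Suc spread_def dest: graph_edgeD)

lemma ff_state_no_edges: "fst (ff_state {} F S t) = F"
  by (induction t) (simp_all add: ff_state_fst_Suc spread_def)

lemma valid_strategy_mono_budget:
  assumes "valid_strategy V E F b S" "b \<le> b'"
  shows "valid_strategy V E F b' S"
  unfolding valid_strategy_def
proof (intro allI impI)
  fix t :: nat assume "0 < t"
  then show "S t \<subseteq> V \<and> card (S t) \<le> b' \<and> S t \<inter> fst (ff_state E F S (t - 1)) = {}"
    using assms unfolding valid_strategy_def by (meson le_trans)
qed

section \<open>Trapping the fire behind covered gaps\<close>

locale confinement =
  fixes V :: "nat set" and E :: "nat set set" and pos :: "nat \<Rightarrow> nat" and k :: nat
    and F :: "nat set" and r :: nat
  assumes graph: "graph V E" and layout: "linear_layout V E pos (Suc k)" and F_subset: "F \<subseteq> V"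
    and radius: "4 * Suc k * card F \<le> r"
begin

definition "B = nbhd E F r"
definition "covered i \<longleftrightarrow> (\<exists>e\<in>E. e \<subseteq> B \<and> crosses pos e i)"
definition "enclosed f x \<longleftrightarrow> (\<forall>i. between (pos f) (pos x) i \<longrightarrow> covered i)"
definition "W = {x\<in>V. \<exists>f\<in>F. enclosed f x}"
definition "frontier f i \<longleftrightarrow> \<not> covered i \<and> (\<forall>j. between (pos f) i j \<and> j \<noteq> i \<longrightarrow> covered j)"
definition "P = {w\<in>V - B. \<exists>f\<in>F. \<exists>e\<in>E. w \<in> e \<and> (\<exists>i. frontier f i \<and> crosses pos e i)}"
definition "V' = W - B - P"
definition "E' = {e\<in>E. e \<subseteq> V'}"
definition "F' = spread E B P - B"

lemma finite_V: "finite V"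
  using graph unfolding graph_def by blast

lemma B_subset: "B \<subseteq> V"
  unfolding B_def using nbhd_subset[OF graph F_subset] .

lemma P_B_disjoint: "P \<inter> B = {}"
  unfolding P_def by blast

lemma P_subset: "P \<subseteq> V"
  unfolding P_def by blast

lemma V'_subset: "V' \<subseteq> V"
  unfolding V'_def W_def by blast

lemma V'_B_disjoint: "V' \<inter> B = {}"
  unfolding V'_def by blast

lemma frontier_not_crossed:
  assumes "frontier f i" "f \<in> F" "{x, y} \<in> E" "crosses pos {x, y} i" "x \<notin> P" "y \<notin> P"
  shows False
proof -
  have "w \<in> P" if "w \<in> {x, y}" "w \<in> V - B" for w
    unfolding P_def using that assms(1-4) by blast
  moreover have "x \<in> V" "y \<in> V" using graph_edgeD[OF graph assms(3)] by auto
  ultimately have "{x, y} \<subseteq> B" using assms(5,6) by blast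
  then have "covered i" unfolding covered_def using assms(3,4) by blast
  then show False using assms(1) unfolding frontier_def by blast
qed

lemma enclosed_edge:
  assumes "enclosed f x" "{x, y} \<in> E" "x \<notin> P" "y \<notin> P" "f \<in> F"
  shows "enclosed f y"
proof (rule ccontr)
  assume "\<not> enclosed f y"
  then obtain i where "between (pos f) (pos y) i" "\<not> covered i" unfolding enclosed_def by blast
  then obtain i0 where i0: "between (pos f) (pos y) i0" "frontier f i0"
    using between_nearest[of "pos f" "pos y" i covered] unfolding frontier_def by blast
  have "\<not> covered i0" using i0(2) unfolding frontier_def by blast
  then have "\<not> between (pos f) (pos x) i0" using assms(1) unfolding enclosed_def by blast
  then have "crosses pos {x, y} i0"
    using between_split[OF i0(1)] by (simp add: crosses_doubleton)
  then show False by (rule frontier_not_crossed[OF i0(2) assms(5,2) _ assms(3,4)])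
qed

lemma W_edge:
  assumes "x \<in> W" "{x, y} \<in> E" "x \<notin> P" "y \<notin> P"
  shows "y \<in> W"
proof -
  obtain f where f: "f \<in> F" "enclosed f x" using assms(1) unfolding W_def by blast
  then have "enclosed f y" by (intro enclosed_edge[OF f(2) assms(2-4) f(1)])
  moreover have "y \<in> V" using graph_edgeD[OF graph assms(2)] by blast
  ultimately show ?thesis unfolding W_def using \<open>f \<in> F\<close> by blast
qed

lemma nbhd_subset_W: "t \<le> r \<Longrightarrow> nbhd E F t \<subseteq> W"
proof (induction t)
  case 0
  have "enclosed f f" for f unfolding enclosed_def between_def by auto
  then show ?case using F_subset unfolding W_def by auto
next
  case (Suc t)
  have "nbhd E F (Suc t) \<subseteq> B" unfolding B_def using nbhd_mono Suc.prems by blast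
  then have not_P: "x \<notin> P" if "x \<in> nbhd E F (Suc t)" for x using that P_B_disjoint by blast
  show ?case
  proof
    fix y assume y: "y \<in> nbhd E F (Suc t)"
    show "y \<in> W"
    proof (cases "y \<in> nbhd E F t")
      case True then show ?thesis using Suc by auto
    next
      case False
      then obtain x where x: "x \<in> nbhd E F t" "{x, y} \<in> E" using y by auto
      then have "x \<in> W" "x \<notin> P" using Suc not_P by auto
      then show ?thesis using W_edge x(2) not_P y by blast
    qed
  qed
qed

lemma B_subset_W: "B \<subseteq> W"
  unfolding B_def using nbhd_subset_W by simp

lemma F'_subset_V': "F' \<subseteq> V'"
proof
  fix v assume "v \<in> F'"
  then obtain u where u: "u \<in> B" "{u, v} \<in> E" "v \<notin> P" "v \<notin> B"
    unfolding F'_def spread_def by blast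
  then have "v \<in> W" using W_edge B_subset_W P_B_disjoint by blast
  then show "v \<in> V'" unfolding V'_def using u by blast
qed

lemma card_F'_le: "card F' \<le> card F * (2 * Suc k + 1) ^ Suc r"
proof -
  have "F' \<subseteq> nbhd E F (Suc r)" unfolding F'_def spread_def B_def by auto
  then have "card F' \<le> card (nbhd E F (Suc r))"
    using nbhd_subset[OF graph F_subset] finite_V by (meson card_mono finite_subset)
  also have "\<dots> \<le> card F * (2 * Suc k + 1) ^ Suc r"
    by (rule card_nbhd_le[OF graph layout F_subset])
  finally show ?thesis .
qed

lemma graph_V'_E': "graph V' E'"
  using graph V'_subset finite_V finite_subset unfolding graph_def E'_def by auto

lemma covered_if_crosses_E':
  assumes "e \<in> E'" "crosses pos e i"
  shows "covered i"
proof -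
  obtain x y where e: "e = {x, y}" using graph_edgeE[OF graph_V'_E' assms(1)] by blast
  then have xy: "x \<in> V'" "y \<in> V'" "{x, y} \<in> E" using assms(1) unfolding E'_def by auto
  then obtain f where f: "f \<in> F" "enclosed f x" unfolding V'_def W_def by blast
  have "x \<notin> P" "y \<notin> P" using xy unfolding V'_def by auto
  then have "enclosed f y" using enclosed_edge[OF f(2) xy(3) _ _ f(1)] by blast
  moreover have "between (pos f) (pos x) i \<or> between (pos f) (pos y) i"
    using assms(2) e between_cases by (simp add: crosses_doubleton)
  ultimately show ?thesis using f(2) unfolding enclosed_def by blast
qed

lemma linear_layout_V'_E': "linear_layout V' E' pos k"
  unfolding linear_layout_def
proof (intro conjI allI)
  show "inj_on pos V'"
    using layout V'_subset inj_on_subset unfolding linear_layout_def by blast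
next
  fix i
  show "card {e\<in>E'. crosses pos e i} \<le> k"
  proof (cases "\<exists>e\<in>E'. crosses pos e i")
    case False
    then have "{e\<in>E'. crosses pos e i} = {}" by blast
    then show ?thesis by (metis card.empty zero_le)
  next
    case True
    then have "covered i" using covered_if_crosses_E' by blast
    then obtain e1 where e1: "e1 \<in> E" "e1 \<subseteq> B" "crosses pos e1 i" unfolding covered_def by blast
    have "e1 \<noteq> {}" using e1(3) unfolding crosses_def by blast
    then have "e1 \<notin> E'" using e1(2) V'_B_disjoint unfolding E'_def by blast
    then have "{e\<in>E'. crosses pos e i} \<subseteq> {e\<in>E. crosses pos e i} - {e1}"
      unfolding E'_def by blast
    then have "card {e\<in>E'. crosses pos e i} \<le> card ({e\<in>E. crosses pos e i} - {e1})"
      using graph_finite_edges[OF graph] by (intro card_mono) auto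
    also have "\<dots> = card {e\<in>E. crosses pos e i} - 1"
      using e1 by (intro card_Diff_singleton) auto
    also have "\<dots> \<le> k" using linear_layout_cut_le[OF layout, of i] by linarith
    finally show ?thesis .
  qed
qed

lemma frontier_unique:
  assumes "frontier f i" "frontier f j" "pos f < i \<longleftrightarrow> pos f < j"
  shows "i = j"
proof (rule ccontr)
  assume "i \<noteq> j"
  then have "between (pos f) i j \<or> between (pos f) j i" using assms(3) unfolding between_def by auto
  then show False using assms(1,2) \<open>i \<noteq> j\<close> unfolding frontier_def by blast
qed

definition "side_frontier f s = (THE i. frontier f i \<and> (pos f < i \<longleftrightarrow> s))"

lemma side_frontier: "frontier f i \<Longrightarrow> side_frontier f (pos f < i) = i"
  unfolding side_frontier_def using frontier_unique by (intro the_equality) blast+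

definition "frontier_edges = {e\<in>E. \<exists>f\<in>F. \<exists>i. frontier f i \<and> crosses pos e i}"

lemma card_side_frontier_edges_le:
  "card (\<Union>s\<in>UNIV. {e\<in>E. crosses pos e (side_frontier f s)}) \<le> 2 * Suc k"
proof -
  have "card (\<Union>s\<in>UNIV. {e\<in>E. crosses pos e (side_frontier f s)})
      \<le> (\<Sum>s\<in>UNIV. card {e\<in>E. crosses pos e (side_frontier f s)})"
    by (rule card_UN_le) simp
  also have "\<dots> \<le> (\<Sum>s\<in>(UNIV :: bool set). Suc k)"
    by (intro sum_mono linear_layout_cut_le[OF layout])
  finally show ?thesis by simp
qed

lemma card_frontier_edges_le: "card frontier_edges \<le> card F * (2 * Suc k)"
proof -
  let ?G = "\<lambda>f. \<Union>s\<in>UNIV. {e\<in>E. crosses pos e (side_frontier f s)}"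
  have "frontier_edges \<subseteq> (\<Union>f\<in>F. ?G f)"
  proof
    fix e assume "e \<in> frontier_edges"
    then obtain f i where "e \<in> E" "f \<in> F" "frontier f i" "crosses pos e i"
      unfolding frontier_edges_def by blast
    then show "e \<in> (\<Union>f\<in>F. ?G f)"
      using side_frontier[of f i] by (intro UN_I[of f] UN_I[of "pos f < i"]) auto
  qed
  moreover have "finite (\<Union>f\<in>F. ?G f)"
    using graph_finite_edges[OF graph] by (rule finite_subset[rotated]) blast
  ultimately have "card frontier_edges \<le> card (\<Union>f\<in>F. ?G f)" by (rule card_mono[rotated])
  also have "\<dots> \<le> (\<Sum>f\<in>F. card (?G f))"
    using F_subset finite_V by (intro card_UN_le) (rule finite_subset)
  also have "\<dots> \<le> card F * (2 * Suc k)"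
    using sum_bounded_above[of F _ "2 * Suc k", OF card_side_frontier_edges_le] by simp
  finally show ?thesis .
qed

lemma card_P_le: "card P \<le> r"
proof -
  have "P \<subseteq> \<Union>frontier_edges" unfolding P_def frontier_edges_def by blast
  moreover have edges: "frontier_edges \<subseteq> E" unfolding frontier_edges_def by blast
  then have "\<Union>frontier_edges \<subseteq> V" using graph unfolding graph_def by blast
  then have "finite (\<Union>frontier_edges)" using finite_V by (rule finite_subset)
  ultimately have "card P \<le> card (\<Union>frontier_edges)" by (rule card_mono[rotated])
  also have "\<dots> \<le> 2 * card frontier_edges" by (rule card_Union_edges_le[OF graph edges])
  finally have "card P \<le> 4 * Suc k * card F"
    using card_frontier_edges_le by (simp add: algebra_simps)
  with radius show ?thesis by linarith
qed

text \<open>For \<open>r + 1\<close> steps the fire spreads freely while \<open>P\<close> is protected one vertex per step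
  (the last of these steps protects nothing, as \<open>card P \<le> r\<close>); then \<open>S'\<close> is replayed.\<close>

definition "protect_list = sorted_list_of_set P"
definition "protect t = (if 0 < t \<and> t \<le> length protect_list then {protect_list ! (t - 1)} else {})"
definition "lift S' t = (if t \<le> Suc r then protect t else S' (t - Suc r))"

lemma finite_P: "finite P"
  using P_subset finite_V by (rule finite_subset)

lemma set_protect_list: "set protect_list = P"
  unfolding protect_list_def using finite_P by simp

lemma length_protect_list: "length protect_list \<le> r"
  unfolding protect_list_def using card_P_le finite_P by simp

lemma protect_subset: "protect t \<subseteq> P"
  unfolding protect_def using set_protect_list nth_mem by auto

lemma card_protect_le: "card (protect t) \<le> 1"
  unfolding protect_def by simp

lemma lift_protected_subset: "t \<le> Suc r \<Longrightarrow> snd (ff_state E F (lift S') t) \<subseteq> P"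
proof (induction t)
  case 0 then show ?case by simp
next
  case (Suc t)
  then show ?case using protect_subset[of "Suc t"] by (simp add: ff_state_snd_Suc lift_def)
qed

lemma lift_burned_early: "t \<le> r \<Longrightarrow> fst (ff_state E F (lift S') t) = nbhd E F t"
proof (induction t)
  case 0 then show ?case by simp
next
  case (Suc t)
  have "snd (ff_state E F (lift S') (Suc t)) \<subseteq> P"
    using Suc.prems by (intro lift_protected_subset) simp
  moreover have "nbhd E F (Suc t) \<subseteq> B" unfolding B_def using Suc.prems by (rule nbhd_mono)
  ultimately have "snd (ff_state E F (lift S') (Suc t)) \<inter> nbhd E F (Suc t) = {}"
    using P_B_disjoint by blast
  then show ?case using Suc by (auto simp: ff_state_fst_Suc spread_def)
qed

lemma lift_protected_Suc_r: "snd (ff_state E F (lift S') (Suc r)) = P"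
proof
  show "snd (ff_state E F (lift S') (Suc r)) \<subseteq> P" by (rule lift_protected_subset) simp
  show "P \<subseteq> snd (ff_state E F (lift S') (Suc r))"
  proof
    fix p assume "p \<in> P"
    then obtain j where j: "j < length protect_list" "p = protect_list ! j"
      using set_protect_list by (metis in_set_conv_nth)
    then have "lift S' (Suc j) = {p}" using length_protect_list unfolding lift_def protect_def by auto
    moreover have "lift S' (Suc j) \<subseteq> snd (ff_state E F (lift S') (Suc r))"
      using j length_protect_list by (intro ff_state_protected) auto
    ultimately show "p \<in> snd (ff_state E F (lift S') (Suc r))" by blast
  qed
qed

lemma lift_burned_Suc_r: "fst (ff_state E F (lift S') (Suc r)) = B \<union> F'"
  unfolding ff_state_fst_Suc lift_protected_Suc_r lift_burned_early[OF order_refl]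
    B_def[symmetric] F'_def by blast

lemma spread_confined:
  assumes "F' \<subseteq> X" "X \<subseteq> V'"
  shows "B \<union> X \<union> spread E (B \<union> X) (P \<union> Q) = B \<union> (X \<union> spread E' X Q)"
proof -
  have "v \<in> X \<union> spread E' X Q" if v: "v \<in> spread E (B \<union> X) (P \<union> Q)" "v \<notin> B" for v
  proof -
    obtain u where u: "u \<in> B \<union> X" "{u, v} \<in> E" "v \<notin> P" "v \<notin> Q"
      using v(1) unfolding spread_def by blast
    show ?thesis
    proof (cases "u \<in> B")
      case True
      then have "v \<in> F'" unfolding F'_def spread_def using u v(2) by blast
      then show ?thesis using assms(1) by blast
    next
      case False
      then have "u \<in> X" "u \<in> V'" using u(1) assms(2) by blast+
      then have "u \<in> W" "u \<notin> P" unfolding V'_def by blast+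
      then have "v \<in> V'" using W_edge[OF _ u(2) _ u(3)] v(2) u(3) unfolding V'_def by blast
      then have "{u, v} \<in> E'" unfolding E'_def using \<open>u \<in> V'\<close> u(2) by blast
      then show ?thesis unfolding spread_def using \<open>u \<in> X\<close> u(4) by blast
    qed
  qed
  moreover have "spread E' X Q \<subseteq> spread E (B \<union> X) (P \<union> Q)"
    unfolding spread_def E'_def V'_def by blast
  ultimately show ?thesis by blast
qed

lemma lift_state:
  "fst (ff_state E F (lift S') (Suc r + t)) = B \<union> fst (ff_state E' F' S' t) \<and>
   snd (ff_state E F (lift S') (Suc r + t)) = P \<union> snd (ff_state E' F' S' t)"
proof (induction t)
  case 0 then show ?case using lift_burned_Suc_r lift_protected_Suc_r by simp
next
  case (Suc t)
  let ?X = "fst (ff_state E' F' S' t)"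
  have "lift S' (Suc (Suc r + t)) = S' (Suc t)" unfolding lift_def by simp
  then have snd_eq: "snd (ff_state E F (lift S') (Suc (Suc r + t))) = P \<union> snd (ff_state E' F' S' (Suc t))"
    using Suc ff_state_snd_Suc[of E F "lift S'" "Suc r + t"] ff_state_snd_Suc[of E' F' S' t] by auto
  have IH: "fst (ff_state E F (lift S') (Suc r + t)) = B \<union> ?X" using Suc by blast
  have "F' \<subseteq> ?X" using ff_state_fst_mono[of 0 t E' F' S'] by simp
  moreover have "?X \<subseteq> V'" by (rule ff_state_fst_subset[OF graph_V'_E' F'_subset_V'])
  ultimately have "B \<union> ?X \<union> spread E (B \<union> ?X) (P \<union> snd (ff_state E' F' S' (Suc t)))
      = B \<union> fst (ff_state E' F' S' (Suc t))"
    unfolding ff_state_fst_Suc[of E' F' S' t] by (rule spread_confined)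
  then have "fst (ff_state E F (lift S') (Suc (Suc r + t))) = B \<union> fst (ff_state E' F' S' (Suc t))"
    using ff_state_fst_Suc[of E F "lift S'" "Suc r + t"] snd_eq IH by (simp only:)
  with snd_eq show ?case by simp
qed

lemma lift_valid:
  assumes "valid_strategy V' E' F' 1 S'"
  shows "valid_strategy V E F 1 (lift S')"
  unfolding valid_strategy_def
proof (intro allI impI)
  fix t :: nat assume "0 < t"
  show "lift S' t \<subseteq> V \<and> card (lift S' t) \<le> 1 \<and> lift S' t \<inter> fst (ff_state E F (lift S') (t - 1)) = {}"
  proof (cases "t \<le> Suc r")
    case True
    have "fst (ff_state E F (lift S') (t - 1)) = nbhd E F (t - 1)"
      using True by (intro lift_burned_early) simp
    also have "\<dots> \<subseteq> B" unfolding B_def using True by (intro nbhd_mono) simp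
    finally show ?thesis
      using True protect_subset[of t] card_protect_le[of t] P_subset P_B_disjoint
      unfolding lift_def by auto
  next
    case False
    define s where "s = t - Suc r"
    then have s: "0 < s" "t - 1 = Suc r + (s - 1)" "lift S' t = S' s"
      using False unfolding lift_def by auto
    moreover have "fst (ff_state E F (lift S') (Suc r + (s - 1))) = B \<union> fst (ff_state E' F' S' (s - 1))"
      using lift_state by blast
    ultimately show ?thesis
      using assms[unfolded valid_strategy_def, rule_format, OF s(1)] V'_subset V'_B_disjoint by auto
  qed
qed

lemma final_burned_lift: "final_burned E F (lift S') \<subseteq> B \<union> final_burned E' F' S'"
proof
  fix v assume "v \<in> final_burned E F (lift S')"
  then obtain t where t: "v \<in> fst (ff_state E F (lift S') t)" unfolding final_burned_def by blast
  show "v \<in> B \<union> final_burned E' F' S'"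
  proof (cases "t \<le> r")
    case True
    then show ?thesis using t lift_burned_early nbhd_mono unfolding B_def by blast
  next
    case False
    then have "t = Suc r + (t - Suc r)" by simp
    then have "v \<in> B \<union> fst (ff_state E' F' S' (t - Suc r))" using lift_state t by metis
    then show ?thesis unfolding final_burned_def by blast
  qed
qed

lemma lift_strategy:
  assumes "valid_strategy V' E' F' 1 S'"
  shows "valid_strategy V E F 1 (lift S') \<and>
    card (final_burned E F (lift S')) \<le> card F * (2 * Suc k + 1) ^ r + card (final_burned E' F' S')"
proof
  show "valid_strategy V E F 1 (lift S')" by (rule lift_valid[OF assms])
  have "final_burned E' F' S' \<subseteq> V"
    using ff_state_fst_subset[OF graph_V'_E' F'_subset_V'] V'_subset unfolding final_burned_def by blast
  then have "finite (B \<union> final_burned E' F' S')" using B_subset finite_V finite_subset by blast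
  then have "card (final_burned E F (lift S')) \<le> card (B \<union> final_burned E' F' S')"
    by (rule card_mono[OF _ final_burned_lift])
  also have "\<dots> \<le> card B + card (final_burned E' F' S')" by (rule card_Un_le)
  also have "card B \<le> card F * (2 * Suc k + 1) ^ r"
    unfolding B_def by (rule card_nbhd_le[OF graph layout F_subset])
  finally show "card (final_burned E F (lift S')) \<le> card F * (2 * Suc k + 1) ^ r + card (final_burned E' F' S')"
    by simp
qed

end

lemma firefighting_linear_layout:
  "\<exists>N. \<forall>V E F pos. graph V E \<longrightarrow> linear_layout V E pos k \<longrightarrow> F \<subseteq> V \<longrightarrow> card F \<le> m \<longrightarrow>
     (\<exists>S. valid_strategy V E F 1 S \<and> card (final_burned E F S) \<le> N)"
proof (induction k arbitrary: m)
  case 0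
  have "valid_strategy V E F 1 (\<lambda>_. {}) \<and> card (final_burned E F (\<lambda>_. {})) \<le> m"
    if "graph V E" "linear_layout V E pos 0" "card F \<le> m" for V E F pos
    using that linear_layout_0_no_edges[OF that(1,2)]
    by (simp add: valid_strategy_def final_burned_def ff_state_no_edges)
  then show ?case by blast
next
  case (Suc k)
  define r where "r = 4 * Suc k * m"
  obtain N where N: "\<forall>V E F pos. graph V E \<longrightarrow> linear_layout V E pos k \<longrightarrow> F \<subseteq> V \<longrightarrow>
      card F \<le> m * (2 * Suc k + 1) ^ Suc r \<longrightarrow>
      (\<exists>S. valid_strategy V E F 1 S \<and> card (final_burned E F S) \<le> N)"
    using Suc.IH by blast
  have "\<exists>S. valid_strategy V E F 1 S \<and> card (final_burned E F S) \<le> m * (2 * Suc k + 1) ^ r + N"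
    if a: "graph V E" "linear_layout V E pos (Suc k)" "F \<subseteq> V" "card F \<le> m" for V E F pos
  proof -
    interpret confinement V E pos k F r
      using a by unfold_locales (auto simp: r_def)
    have "card F' \<le> m * (2 * Suc k + 1) ^ Suc r"
      using card_F'_le a(4) by (meson le_trans mult_le_mono1)
    then obtain S' where S': "valid_strategy V' E' F' 1 S'" "card (final_burned E' F' S') \<le> N"
      using N graph_V'_E' linear_layout_V'_E' F'_subset_V' by blast
    have "card F * (2 * Suc k + 1) ^ r \<le> m * (2 * Suc k + 1) ^ r"
      using a(4) by (rule mult_le_mono1)
    then show ?thesis using lift_strategy[OF S'(1)] S'(2) by (meson add_le_mono le_trans)
  qed
  then show ?case by blast
qed

theorem mainTheorem5:
  fixes g1 :: "nat \<Rightarrow> nat"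
  shows "\<exists>g2 :: nat \<Rightarrow> nat. (\<forall>n. g1 n \<le> g2 n) \<and>
    (\<forall>V E F (b::nat). graph V E \<longrightarrow> F \<subseteq> V \<longrightarrow> card F \<le> g1 (cutwidth V E) \<longrightarrow> 1 \<le> b \<longrightarrow>
       (\<exists>S. valid_strategy V E F b S \<and> card (final_burned E F S) \<le> g2 (cutwidth V E)))"
proof -
  have "\<forall>k. \<exists>N. \<forall>V E F pos. graph V E \<longrightarrow> linear_layout V E pos k \<longrightarrow> F \<subseteq> V \<longrightarrow>
      card F \<le> g1 k \<longrightarrow> (\<exists>S. valid_strategy V E F 1 S \<and> card (final_burned E F S) \<le> N)"
    using firefighting_linear_layout by blast
  then obtain N where N: "\<And>k. \<forall>V E F pos. graph V E \<longrightarrow> linear_layout V E pos k \<longrightarrow> F \<subseteq> V \<longrightarrow>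
      card F \<le> g1 k \<longrightarrow> (\<exists>S. valid_strategy V E F 1 S \<and> card (final_burned E F S) \<le> N k)"
    by metis
  have "\<exists>S. valid_strategy V E F b S \<and> card (final_burned E F S) \<le> max (g1 (cutwidth V E)) (N (cutwidth V E))"
    if a: "graph V E" "F \<subseteq> V" "card F \<le> g1 (cutwidth V E)" "1 \<le> b" for V E F b
  proof -
    obtain pos where "linear_layout V E pos (cutwidth V E)" using cutwidth_linear_layout[OF a(1)] by blast
    then obtain S where "valid_strategy V E F 1 S" "card (final_burned E F S) \<le> N (cutwidth V E)"
      using N a by blast
    then show ?thesis using valid_strategy_mono_budget a(4) by (meson le_trans max.cobounded2)
  qed
  then show ?thesis by (intro exI[of _ "\<lambda>n. max (g1 n) (N n)"]) auto
qed

end
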